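(* Let $\alpha>2$, and for $s_1,s_2>0$ define \[ f(s_1,s_2)=\frac{\int_0^\infty e^{-(s_1+s_2)x^{2/\alpha}}\frac{dx}{1+x}}{s_1\int_0^\infty x^{2/\alpha}e^{-(s_1+s_2)x^{2/\alpha}}\frac{dx}{1+x}}. \] Then the function $s\mapsto f(s,s)$ is monotonically decreasing on $(0,\infty)$. *)

theory Defs
  imports "HOL-Analysis.Analysis"
begin

definition num_int :: "real \<Rightarrow> real \<Rightarrow> real \<Rightarrow> real" where
  "num_int \<alpha> s1 s2 = (LBINT x:{0<..}. exp (-(s1+s2) * x powr (2/\<alpha>)) / (1 + x))"

definition den_int :: "real \<Rightarrow> real \<Rightarrow> real \<Rightarrow> real" where
  "den_int \<alpha> s1 s2 = (LBINT x:{0<..}. x powr (2/\<alpha>) * exp (-(s1+s2) * x powr (2/\<alpha>)) / (1 + x))"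

definition f_ratio :: "real \<Rightarrow> real \<Rightarrow> real \<Rightarrow> real" where
  "f_ratio \<alpha> s1 s2 = num_int \<alpha> s1 s2 / (s1 * den_int \<alpha> s1 s2)"

end

theory Submission
  imports Defs "HOL-Real_Asymp.Real_Asymp"
begin

text \<open>
  Put b = 2/\<alpha>. For 0 < s \<le> s' the substitution x \<mapsto> c x with c^b = s/s' turns the
  integrals defining f(s',s') into integrals at s in which 1/(1+x) is replaced by 1/(\<lambda>+x),
  with \<lambda> = (s'/s)^(\<alpha>/2) \<ge> 1. The claim then says that the mean of x^b under the weight
  exp(-2s x^b)/(\<lambda>+x) is at least its mean under exp(-2s x^b)/(1+x). This is Chebyshev's
  correlation inequality: the first weight is the second times the increasing function
  (1+x)/(\<lambda>+x), and x^b is increasing too.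
\<close>

lemma continuous_on_atLeast_tendsto_bounded:
  fixes g :: "real \<Rightarrow> real"
  assumes cont: "continuous_on {a..} g" and lim: "(g \<longlongrightarrow> l) at_top"
  obtains K where "\<And>x. x \<ge> a \<Longrightarrow> \<bar>g x\<bar> \<le> K"
proof -
  have "\<forall>\<^sub>F x in at_top. dist (g x) l < 1"
    using lim by (rule tendstoD) simp
  then obtain X where far: "\<And>x. x \<ge> X \<Longrightarrow> \<bar>g x - l\<bar> < 1"
    by (auto simp: eventually_at_top_linorder dist_real_def)
  have "compact (g ` {a..max a X})"
    by (rule compact_continuous_image) (auto intro: continuous_on_subset[OF cont])
  then obtain B where "\<forall>y \<in> g ` {a..max a X}. \<bar>y\<bar> \<le> B"
    using compact_imp_bounded bounded_real by blast
  then have near: "\<And>x. x \<in> {a..max a X} \<Longrightarrow> \<bar>g x\<bar> \<le> B"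
    by blast
  have "\<bar>g x\<bar> \<le> max B (\<bar>l\<bar> + 1)" if "x \<ge> a" for x
  proof (cases "x \<le> max a X")
    case False
    then have "\<bar>g x - l\<bar> < 1" by (intro far) simp
    then show ?thesis by linarith
  next
    case True
    then show ?thesis using near[of x] that by auto
  qed
  then show thesis by (rule that)
qed

lemma powr_exp_decay_bounded:
  fixes b t :: real
  assumes "b > 0" "t > 0"
  obtains K where "\<And>x. x \<ge> 0 \<Longrightarrow> (1 + x powr b) * (1 + x) * exp (-t * x powr b) \<le> K"
proof -
  have "continuous_on {0..} (\<lambda>x. (1 + x powr b) * (1 + x) * exp (-t * x powr b))"
    using \<open>b > 0\<close> by (intro continuous_intros continuous_on_powr') auto
  moreover have "((\<lambda>x. (1 + x powr b) * (1 + x) * exp (-t * x powr b)) \<longlongrightarrow> 0) at_top"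
    using assms by real_asymp
  ultimately obtain K where "\<And>x. x \<ge> 0 \<Longrightarrow> \<bar>(1 + x powr b) * (1 + x) * exp (-t * x powr b)\<bar> \<le> K"
    by (rule continuous_on_atLeast_tendsto_bounded) auto
  then show thesis by (meson abs_ge_self order_trans that)
qed

lemma set_integrable_inverse_square_shifted:
  "set_integrable lborel {0<..} (\<lambda>x::real. 1 / (1 + x)^2)"
proof -
  have "((\<lambda>x::real. 1 / (1 + x)^2) has_integral 1) {0..}"
  proof (rule has_integral_to_inf)
    show "(\<lambda>x::real. 1 / (1 + x)^2) integrable_on {0..y}" for y
      by (intro integrable_continuous_interval continuous_intros) auto
    have "((\<lambda>x::real. 1 / (1 + x)^2) has_integral (- 1 / (1 + y) - (- 1 / (1 + 0)))) {0..y}"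
      if "y \<ge> 0" for y :: real
      using that by (intro fundamental_theorem_of_calculus)
         (auto intro!: derivative_eq_intros simp: power2_eq_square
               simp flip: has_real_derivative_iff_has_vector_derivative)
    then have "\<forall>\<^sub>F y in at_top. integral {0..y} (\<lambda>x::real. 1 / (1 + x)^2) = 1 - 1 / (1 + y)"
      by (intro eventually_at_top_linorderI[of 0]) (auto dest: integral_unique)
    moreover have "((\<lambda>y::real. 1 - 1 / (1 + y)) \<longlongrightarrow> 1) at_top"
      by real_asymp
    ultimately show "((\<lambda>y. integral {0..y} (\<lambda>x::real. 1 / (1 + x)^2)) \<longlongrightarrow> 1) at_top"
      by (simp add: filterlim_cong)
  qed auto
  then have "(\<lambda>x::real. 1 / (1 + x)^2) absolutely_integrable_on {0..}"
    by (intro nonnegative_absolutely_integrable_1) (auto simp: has_integral_integrable)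
  then have "set_integrable lebesgue {0<..} (\<lambda>x::real. 1 / (1 + x)^2)"
    by (rule set_integrable_subset) auto
  then show ?thesis
    unfolding set_integrable_def by (subst (asm) integrable_completion) auto
qed

definition exp_powr_kernel :: "real \<Rightarrow> real \<Rightarrow> real \<Rightarrow> real \<Rightarrow> real" where
  "exp_powr_kernel b t L x = exp (-t * x powr b) / (L + x)"

lemma exp_powr_kernel_pos: "L + x > 0 \<Longrightarrow> 0 < exp_powr_kernel b t L x"
  by (simp add: exp_powr_kernel_def)

lemma set_integrable_exp_powr_kernel:
  fixes b t L :: real
  assumes b: "b > 0" and t: "t > 0" and L: "L \<ge> 1"
  shows "set_integrable lborel {0<..} (exp_powr_kernel b t L)"
    and "set_integrable lborel {0<..} (\<lambda>x. x powr b * exp_powr_kernel b t L x)"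
proof -
  obtain K where K: "\<And>x. x \<ge> 0 \<Longrightarrow> (1 + x powr b) * (1 + x) * exp (-t * x powr b) \<le> K"
    using powr_exp_decay_bounded[OF b t] by blast
  have "K \<ge> 0"
    using K[of 0] by simp
  have envelope: "set_integrable lborel {0<..} (\<lambda>x::real. K * (1 / (1 + x)^2))"
    by (intro set_integrable_mult_right set_integrable_inverse_square_shifted)
  have dominated: "\<bar>h x\<bar> \<le> \<bar>K * (1 / (1 + x)^2)\<bar>"
    if "x > 0" and h: "0 \<le> h x" "h x \<le> (1 + x powr b) * exp_powr_kernel b t L x" for h x
  proof -
    have "(1 + x powr b) * exp_powr_kernel b t L x \<le> (1 + x powr b) * (exp (-t * x powr b) / (1 + x))"
      using \<open>x > 0\<close> L unfolding exp_powr_kernel_def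
      by (intro mult_left_mono divide_left_mono) (auto intro: add_nonneg_nonneg)
    also have "\<dots> = (1 + x powr b) * (1 + x) * exp (-t * x powr b) / (1 + x)^2"
      using \<open>x > 0\<close> by (simp add: power2_eq_square)
    also have "\<dots> \<le> K / (1 + x)^2"
      using K[of x] \<open>x > 0\<close> by (intro divide_right_mono) auto
    finally show ?thesis using h \<open>K \<ge> 0\<close> by simp
  qed
  have pos: "0 < exp_powr_kernel b t L x" if "x > 0" for x
    using that L by (intro exp_powr_kernel_pos) simp
  show "set_integrable lborel {0<..} (exp_powr_kernel b t L)"
  proof (rule set_integrable_bound[OF envelope])
    show "set_borel_measurable lborel {0<..} (exp_powr_kernel b t L)"
      unfolding set_borel_measurable_def exp_powr_kernel_def by measurable
    show "AE x\<in>{0<..} in lborel. norm (exp_powr_kernel b t L x) \<le> norm (K * (1 / (1 + x)^2))"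
      using pos dominated[where h = "exp_powr_kernel b t L"]
      by (intro AE_I2 impI) (auto simp: distrib_right less_imp_le)
  qed
  show "set_integrable lborel {0<..} (\<lambda>x. x powr b * exp_powr_kernel b t L x)"
  proof (rule set_integrable_bound[OF envelope])
    show "set_borel_measurable lborel {0<..} (\<lambda>x. x powr b * exp_powr_kernel b t L x)"
      unfolding set_borel_measurable_def exp_powr_kernel_def by measurable
    show "AE x\<in>{0<..} in lborel.
        norm (x powr b * exp_powr_kernel b t L x) \<le> norm (K * (1 / (1 + x)^2))"
      using pos dominated[where h = "\<lambda>x. x powr b * exp_powr_kernel b t L x"]
      by (intro AE_I2 impI) (auto simp: distrib_right less_imp_le)
  qed
qed

lemma set_integral_pos_of_lower_bound:
  fixes h :: "real \<Rightarrow> real"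
  assumes int: "set_integrable lborel A h" and nonneg: "\<And>x. x \<in> A \<Longrightarrow> 0 \<le> h x"
    and sub: "{a..b} \<subseteq> A" and "a < b" and lower: "\<And>x. x \<in> {a..b} \<Longrightarrow> c \<le> h x" and "c > 0"
  shows "0 < (LINT x:A|lborel. h x)"
proof -
  have int_ab: "set_integrable lborel {a..b} h"
    by (rule set_integrable_subset[OF int _ sub]) simp
  have "0 < c * (b - a)"
    using \<open>a < b\<close> \<open>c > 0\<close> by simp
  also have "\<dots> = (LINT x:{a..b}|lborel. c)"
    using \<open>a < b\<close> by (simp add: set_integral_const)
  also have "\<dots> \<le> (LINT x:{a..b}|lborel. h x)"
    using \<open>a < b\<close> by (intro set_integral_mono[OF _ int_ab lower]) (simp add: set_integrable_def)
  also have "\<dots> \<le> (LINT x:A|lborel. h x)"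
    using int_ab int sub nonneg unfolding set_lebesgue_integral_def set_integrable_def
    by (intro integral_mono) (auto split: split_indicator)
  finally show ?thesis .
qed

lemma exp_powr_kernel_integral_pos:
  fixes b t L :: real
  assumes b: "b > 0" and t: "t > 0" and L: "L \<ge> 1"
  shows "0 < (LBINT x:{0<..}. exp_powr_kernel b t L x)"
    and "0 < (LBINT x:{0<..}. x powr b * exp_powr_kernel b t L x)"
proof -
  have lower: "exp_powr_kernel b t L 2 \<le> exp_powr_kernel b t L x" if "x \<in> {1..2}" for x
    using that t b L unfolding exp_powr_kernel_def
    by (intro frac_le) (auto intro!: mult_left_mono powr_mono2)
  have pos: "0 < exp_powr_kernel b t L x" if "x \<ge> 0" for x
    using that L by (intro exp_powr_kernel_pos) simp
  show "0 < (LBINT x:{0<..}. exp_powr_kernel b t L x)"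
    using set_integrable_exp_powr_kernel(1)[OF b t L] pos lower
    by (intro set_integral_pos_of_lower_bound[where a = 1 and b = 2 and c = "exp_powr_kernel b t L 2"])
       (auto intro: less_imp_le)
  have grows: "exp_powr_kernel b t L x \<le> x powr b * exp_powr_kernel b t L x" if "x \<in> {1..2}" for x
    using that pos[of x] b by (intro mult_le_cancel_right1[THEN iffD2]) (auto intro: ge_one_powr_ge_zero)
  show "0 < (LBINT x:{0<..}. x powr b * exp_powr_kernel b t L x)"
    using set_integrable_exp_powr_kernel(2)[OF b t L] pos order_trans[OF lower grows] b
    by (intro set_integral_pos_of_lower_bound[where a = 1 and b = 2 and c = "exp_powr_kernel b t L 2"])
       (auto intro: less_imp_le)
qed

lemma set_integral_greaterThan_0_rescale:
  fixes G :: "real \<Rightarrow> real" and c :: real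
  assumes "c > 0"
  shows "(LBINT u:{0<..}. G u) = (LBINT x:{0<..}. c * G (c * x))"
proof -
  have "(LBINT u:{0<..}. G u) = \<bar>c\<bar> *\<^sub>R (LBINT x. indicator {0<..} (0 + c * x) *\<^sub>R G (0 + c * x))"
    unfolding set_lebesgue_integral_def using assms by (intro lborel_integral_real_affine) simp
  also have "\<dots> = (LBINT x. c *\<^sub>R (indicator {0<..} (0 + c * x) *\<^sub>R G (0 + c * x)))"
    using assms by simp
  also have "\<dots> = (LBINT x. indicator {0<..} x *\<^sub>R (c * G (c * x)))"
    using assms by (intro Bochner_Integration.integral_cong) (auto simp: indicator_def zero_less_mult_iff)
  finally show ?thesis
    by (simp only: set_lebesgue_integral_def)
qed

lemma exp_powr_kernel_rescale:
  assumes "c > 0" "x \<ge> 0"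
  shows "c * exp_powr_kernel b t L (c * x) = exp_powr_kernel b (t * c powr b) (L / c) x"
  using assms by (simp add: exp_powr_kernel_def powr_mult field_simps)

lemma set_integral_exp_powr_kernel_rescale:
  fixes b t L c :: real
  assumes "c > 0"
  shows "(LBINT x:{0<..}. exp_powr_kernel b t L x)
      = (LBINT x:{0<..}. exp_powr_kernel b (t * c powr b) (L / c) x)"
    and "(LBINT x:{0<..}. x powr b * exp_powr_kernel b t L x)
      = c powr b * (LBINT x:{0<..}. x powr b * exp_powr_kernel b (t * c powr b) (L / c) x)"
proof -
  show "(LBINT x:{0<..}. exp_powr_kernel b t L x)
      = (LBINT x:{0<..}. exp_powr_kernel b (t * c powr b) (L / c) x)"
    using assms
    by (subst set_integral_greaterThan_0_rescale[OF assms], intro set_lebesgue_integral_cong)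
       (auto simp: exp_powr_kernel_rescale)
  have "(LBINT x:{0<..}. x powr b * exp_powr_kernel b t L x)
      = (LBINT x:{0<..}. c powr b * (x powr b * exp_powr_kernel b (t * c powr b) (L / c) x))"
    using assms
    by (subst set_integral_greaterThan_0_rescale[OF assms], intro set_lebesgue_integral_cong)
       (auto simp: powr_mult simp flip: exp_powr_kernel_rescale)
  then show "(LBINT x:{0<..}. x powr b * exp_powr_kernel b t L x)
      = c powr b * (LBINT x:{0<..}. x powr b * exp_powr_kernel b (t * c powr b) (L / c) x)"
    by (simp add: set_integral_mult_right)
qed

text \<open>A one-threshold form of Chebyshev's correlation inequality.\<close>

lemma set_integral_weighted_product_ge:
  fixes w f g :: "'a \<Rightarrow> real"
  assumes int_w: "set_integrable M A w"
    and int_wf: "set_integrable M A (\<lambda>x. w x * f x)"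
    and int_wg: "set_integrable M A (\<lambda>x. w x * g x)"
    and int_wfg: "set_integrable M A (\<lambda>x. w x * f x * g x)"
    and nonneg: "\<And>x. x \<in> A \<Longrightarrow> 0 \<le> w x"
    and same_sign: "\<And>x. x \<in> A \<Longrightarrow> 0 \<le> (f x - m) * (g x - r)"
    and mean: "(LINT x:A|M. w x * f x) = m * (LINT x:A|M. w x)"
  shows "m * (LINT x:A|M. w x * g x) \<le> (LINT x:A|M. w x * f x * g x)"
proof -
  have expand: "w x * ((f x - m) * (g x - r))
      = (w x * f x * g x - m * (w x * g x)) - (r * (w x * f x) - (m * r) * w x)" for x
    by (simp add: algebra_simps)
  have "0 \<le> (LINT x:A|M. w x * ((f x - m) * (g x - r)))"
    using nonneg same_sign unfolding set_lebesgue_integral_def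
    by (intro integral_nonneg_AE AE_I2) (auto split: split_indicator)
  also have "\<dots> = ((LINT x:A|M. w x * f x * g x) - m * (LINT x:A|M. w x * g x))
      - (r * (LINT x:A|M. w x * f x) - (m * r) * (LINT x:A|M. w x))"
    unfolding expand
    by (simp add: set_integral_diff set_integrable_mult_right int_w int_wf int_wg int_wfg)
  also have "r * (LINT x:A|M. w x * f x) - (m * r) * (LINT x:A|M. w x) = 0"
    by (simp add: mean)
  finally show ?thesis by simp
qed

lemma shifted_ratio_mono:
  fixes lam x y :: real
  assumes "lam \<ge> 1" "0 \<le> x" "x \<le> y"
  shows "(1 + x) / (lam + x) \<le> (1 + y) / (lam + y)"
proof -
  have "(1 + x) * (lam + y) \<le> (1 + y) * (lam + x)"
    using assms mult_mono[of 0 "lam - 1" 0 "y - x"] by (simp add: algebra_simps)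
  then show ?thesis
    using assms by (simp add: field_simps)
qed

lemma exp_powr_kernel_moment_ratio_mono:
  fixes b t lam :: real
  assumes b: "b > 0" and t: "t > 0" and lam: "lam \<ge> 1"
  shows "(LBINT x:{0<..}. exp_powr_kernel b t lam x) * (LBINT x:{0<..}. x powr b * exp_powr_kernel b t 1 x)
    \<le> (LBINT x:{0<..}. exp_powr_kernel b t 1 x) * (LBINT x:{0<..}. x powr b * exp_powr_kernel b t lam x)"
    (is "?PL * ?Q1 \<le> ?P1 * ?QL")
proof -
  define w where "w = exp_powr_kernel b t 1"
  define g where "g x = (1 + x) / (lam + x)" for x :: real
  have wg: "w x * g x = exp_powr_kernel b t lam x" if "x > 0" for x
    using that lam by (simp add: w_def g_def exp_powr_kernel_def)
  have P1: "?P1 > 0"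
    using exp_powr_kernel_integral_pos(1)[OF b t] by simp
  define m where "m = ?Q1 / ?P1"
  \<comment> \<open>x^b crosses its mean m at x0, so x^b - m and g x - g x0 change sign together.\<close>
  define x0 where "x0 = m powr (1 / b)"
  have "m > 0"
    using P1 exp_powr_kernel_integral_pos(2)[OF b t] by (simp add: m_def)
  then have "x0 > 0" and x0_powr: "x0 powr b = m"
    using b by (simp_all add: x0_def powr_powr)
  have same_sign: "0 \<le> (x powr b - m) * (g x - g x0)" if "x > 0" for x
  proof (cases "x \<le> x0")
    case True
    then have "x powr b \<le> m" and "g x \<le> g x0"
      using that b lam x0_powr by (auto simp: g_def intro: powr_mono2 shifted_ratio_mono)
    then show ?thesis by (simp add: mult_nonpos_nonpos)
  next
    case False
    then have "m \<le> x powr b" and "g x0 \<le> g x"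
      using \<open>x0 > 0\<close> b lam x0_powr by (auto simp: g_def intro: powr_mono2 shifted_ratio_mono)
    then show ?thesis by simp
  qed
  have wfg: "w x * x powr b * g x = x powr b * exp_powr_kernel b t lam x" if "x > 0" for x
    using wg[OF that] by simp
  have "m * ?PL = m * (LBINT x:{0<..}. w x * g x)"
    by (simp add: set_lebesgue_integral_cong wg)
  also have "\<dots> \<le> (LBINT x:{0<..}. w x * x powr b * g x)"
  proof (rule set_integral_weighted_product_ge[OF _ _ _ _ _ same_sign])
    show "set_integrable lborel {0<..} w"
      unfolding w_def by (rule set_integrable_exp_powr_kernel(1)[OF b t order_refl])
    show "set_integrable lborel {0<..} (\<lambda>x. w x * x powr b)"
      unfolding w_def using set_integrable_exp_powr_kernel(2)[OF b t order_refl] by (simp add: mult.commute)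
    show "set_integrable lborel {0<..} (\<lambda>x. w x * g x)"
      using set_integrable_exp_powr_kernel(1)[OF b t lam]
      by (rule set_integrable_cong[THEN iffD1, rotated -1]) (auto simp: wg)
    show "set_integrable lborel {0<..} (\<lambda>x. w x * x powr b * g x)"
      using set_integrable_exp_powr_kernel(2)[OF b t lam]
      by (rule set_integrable_cong[THEN iffD1, rotated -1]) (auto simp: wfg)
    show "(LBINT x:{0<..}. w x * x powr b) = m * (LBINT x:{0<..}. w x)"
      using P1 by (simp add: m_def w_def mult.commute)
  qed (auto simp: w_def less_imp_le exp_powr_kernel_pos)
  also have "(LBINT x:{0<..}. w x * x powr b * g x) = ?QL"
    by (rule set_lebesgue_integral_cong) (auto simp: wfg)
  finally have "m * ?PL \<le> ?QL" .
  then show ?thesis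
    using P1 by (simp add: m_def field_simps)
qed

lemma num_int_eq_kernel:
  "num_int \<alpha> s1 s2 = (LBINT x:{0<..}. exp_powr_kernel (2 / \<alpha>) (s1 + s2) 1 x)"
  by (simp add: num_int_def exp_powr_kernel_def)

lemma den_int_eq_kernel:
  "den_int \<alpha> s1 s2 = (LBINT x:{0<..}. x powr (2 / \<alpha>) * exp_powr_kernel (2 / \<alpha>) (s1 + s2) 1 x)"
  by (simp add: den_int_def exp_powr_kernel_def)

lemma f_ratio_diagonal_rescale:
  fixes \<alpha> s s' :: real
  assumes "\<alpha> > 0" "s > 0" "s' > 0"
  defines "b \<equiv> 2 / \<alpha>" and "lam \<equiv> (s' / s) powr (\<alpha> / 2)"
  shows "f_ratio \<alpha> s' s' = (LBINT x:{0<..}. exp_powr_kernel b (s + s) lam x)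
      / (s * (LBINT x:{0<..}. x powr b * exp_powr_kernel b (s + s) lam x))"
proof -
  define c where "c = (s / s') powr (1 / b)"
  have "c > 0"
    using assms by (simp add: c_def)
  have c_powr: "c powr b = s / s'" and lam_eq: "1 / c = lam"
    using assms by (simp_all add: c_def lam_def b_def powr_powr powr_divide)
  have "num_int \<alpha> s' s' = (LBINT x:{0<..}. exp_powr_kernel b (s + s) lam x)"
    unfolding num_int_eq_kernel b_def[symmetric]
    using set_integral_exp_powr_kernel_rescale(1)[OF \<open>c > 0\<close>, of b "s' + s'" 1] \<open>s' > 0\<close>
    by (simp add: c_powr lam_eq)
  moreover have "s' * den_int \<alpha> s' s' = s * (LBINT x:{0<..}. x powr b * exp_powr_kernel b (s + s) lam x)"
    unfolding den_int_eq_kernel b_def[symmetric]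
    using set_integral_exp_powr_kernel_rescale(2)[OF \<open>c > 0\<close>, of b "s' + s'" 1] \<open>s' > 0\<close>
    by (simp add: c_powr lam_eq)
  ultimately show ?thesis
    by (simp add: f_ratio_def)
qed

theorem lemma1:
  fixes \<alpha> :: real
  assumes "\<alpha> > 2"
  shows "antimono_on {0<..} (\<lambda>s. f_ratio \<alpha> s s)"
proof (rule monotone_onI)
  fix s s' :: real
  assume "s \<in> {0<..}" "s' \<in> {0<..}" "s \<le> s'"
  then have "s > 0" "s' > 0" by auto
  define b where "b = 2 / \<alpha>"
  define lam where "lam = (s' / s) powr (\<alpha> / 2)"
  have "b > 0" "lam \<ge> 1"
    using assms \<open>s > 0\<close> \<open>s \<le> s'\<close> by (auto simp: b_def lam_def intro: ge_one_powr_ge_zero)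
  define P where "P L = (LBINT x:{0<..}. exp_powr_kernel b (s + s) L x)" for L
  define Q where "Q L = (LBINT x:{0<..}. x powr b * exp_powr_kernel b (s + s) L x)" for L
  have moment_ratio: "P lam * Q 1 \<le> P 1 * Q lam"
    using exp_powr_kernel_moment_ratio_mono[OF \<open>b > 0\<close> _ \<open>lam \<ge> 1\<close>] \<open>s > 0\<close>
    by (simp add: P_def Q_def)
  have "Q 1 > 0" "Q lam > 0"
    using exp_powr_kernel_integral_pos(2) \<open>b > 0\<close> \<open>s > 0\<close> \<open>lam \<ge> 1\<close> by (simp_all add: Q_def)
  have ratios: "f_ratio \<alpha> s' s' = P lam / (s * Q lam)" "f_ratio \<alpha> s s = P 1 / (s * Q 1)"
    using f_ratio_diagonal_rescale[of \<alpha> s s'] f_ratio_diagonal_rescale[of \<alpha> s s] assms \<open>s > 0\<close> \<open>s' > 0\<close>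
    by (simp_all add: P_def Q_def lam_def b_def)
  show "f_ratio \<alpha> s' s' \<le> f_ratio \<alpha> s s"
    unfolding ratios using moment_ratio \<open>Q 1 > 0\<close> \<open>Q lam > 0\<close> \<open>s > 0\<close>
    by (simp add: divide_simps mult.commute mult.left_commute)
qed

end
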